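(* Let $\mathbb{F}\in\{\mathbb{R},\mathbb{C}\}$. A tensor $\mathcal{A}\in\mathbb{F}^{[n_1,\ldots,n_m]}$ is $\mathbb{F}$-separable if and only if there exists a Borel measure $\mu$ with support contained in $\mathbb{S}_{\mathbb{F}}^{n_1,\ldots,n_m}$ such that $\mathcal{A}=\int[x_1,\ldots,x_m]_{\otimes h}\,d\mu$.
   Context: $\mathbb{C}^{[n_1,\ldots,n_m]}$ is the real vector space of tensors $\mathcal{H}\in\mathbb{C}^{n_1\times\cdots\times n_m\times n_1\times\cdots\times n_m}$ with $\mathcal{H}_{i_1\ldots i_m j_1\ldots j_m}=\overline{\mathcal{H}_{j_1\ldots j_m i_1\ldots i_m}}$; $\mathbb{R}^{[n_1,\ldots,n_m]}$ is its subset of real tensors. For $v_i\in\mathbb{F}^{n_i}$, $[v_1,\ldots,v_m]_{\otimes h}:=v_1\otimes\cdots\otimes v_m\otimes\overline{v_1}\otimes\cdots\otimes\overline{v_m}$. A tensor is $\mathbb{F}$-separable if it equals $\sum_{i=1}^r[u_i^1,\ldots,u_i^m]_{\otimes h}$ for some $u_i^j\in\mathbb{F}^{n_j}$. $\mathbb{S}_{\mathbb{F}}^{n_1,\ldots,n_m}:=\{(x_1,\ldots,x_m)\in\mathbb{F}^{n_1}\times\cdots\times\mathbb{F}^{n_m}:\|x_1\|=\cdots=\|x_m\|=1\}$ (Euclidean norms). *)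

theory Defs
  imports "HOL-Analysis.Analysis"
begin

text \<open>The field F is encoded as a subset K of the complex numbers,
  K = \<real> (real case) or K = UNIV (complex case). The dimension tuple (n_1,...,n_m)
  is the list dims, m = length dims. A multi-index is a list of length m;
  a tensor in C^[n_1,...,n_m] is a function A :: nat list \<Rightarrow> nat list \<Rightarrow> complex,
  where A i j is the entry H_{i_1..i_m j_1..j_m}; it is required to vanish outside
  the valid index range. A tuple (x_1,...,x_m) of vectors is a function
  x :: nat \<Rightarrow> nat \<Rightarrow> complex with x k i the i-th entry of x_(k+1) (0-based).\<close>

definition midx :: "nat list \<Rightarrow> nat list set" where
  "midx dims = {i. length i = length dims \<and> (\<forall>k<length dims. i ! k < dims ! k)}"

definition hten :: "nat list \<Rightarrow> (nat \<Rightarrow> nat \<Rightarrow> complex) \<Rightarrow> nat list \<Rightarrow> nat list \<Rightarrow> complex" where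
  "hten dims x = (\<lambda>i j. if i \<in> midx dims \<and> j \<in> midx dims
      then (\<Prod>k<length dims. x k (i ! k) * cnj (x k (j ! k))) else 0)"

definition herm_tensors :: "complex set \<Rightarrow> nat list \<Rightarrow> (nat list \<Rightarrow> nat list \<Rightarrow> complex) set" where
  "herm_tensors K dims = {A.
      (\<forall>i j. (i \<in> midx dims \<and> j \<in> midx dims) \<or> A i j = 0) \<and>
      (\<forall>i\<in>midx dims. \<forall>j\<in>midx dims. A i j = cnj (A j i) \<and> A i j \<in> K)}"

definition separable :: "complex set \<Rightarrow> nat list \<Rightarrow> (nat list \<Rightarrow> nat list \<Rightarrow> complex) \<Rightarrow> bool" where
  "separable K dims A \<longleftrightarrow> (\<exists>(r::nat) (u :: nat \<Rightarrow> nat \<Rightarrow> nat \<Rightarrow> complex).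
      (\<forall>l<r. \<forall>k<length dims. \<forall>i<dims ! k. u l k i \<in> K) \<and>
      A = (\<lambda>i j. \<Sum>l<r. hten dims (u l) i j))"

definition sphere_prod :: "complex set \<Rightarrow> nat list \<Rightarrow> (nat \<Rightarrow> nat \<Rightarrow> complex) set" where
  "sphere_prod K dims = {x.
      (\<forall>k i. (k < length dims \<and> i < dims ! k) \<or> x k i = 0) \<and>
      (\<forall>k<length dims. (\<forall>i<dims ! k. x k i \<in> K) \<and> (\<Sum>i<dims ! k. (cmod (x k i))\<^sup>2) = 1)}"

definition msupport :: "'a::topological_space measure \<Rightarrow> 'a set" where
  "msupport \<mu> = {x. \<forall>U. open U \<longrightarrow> x \<in> U \<longrightarrow> emeasure \<mu> U > 0}"

end

theory Submission
  imports Defs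
begin

text \<open>A finite sum \<open>\<Sum>\<^sub>l [u\<^sub>l\<^sup>1, \<dots>, u\<^sub>l\<^sup>m]\<^sub>\<otimes>\<^sub>h\<close> becomes an integral against
  finitely many weighted point masses on the product of spheres once every factor is rescaled to
  unit length, the weight being \<open>\<Prod>\<^sub>k \<parallel>u\<^sub>l\<^sup>k\<parallel>\<^sup>2\<close>. Conversely, read a Hermitian tensor as a
  real vector through the real and imaginary parts of its entries. The integral of a function
  whose values lie almost everywhere in a set \<open>T\<close> of a finite-dimensional space is a nonnegative
  combination of finitely many points of \<open>T\<close>: otherwise a hyperplane separates it from the cone
  generated by \<open>T\<close>, which forces the function into that hyperplane almost everywhere, and one
  concludes by induction on the dimension. Applied to \<open>x \<mapsto> [x\<^sub>1, \<dots>, x\<^sub>m]\<^sub>\<otimes>\<^sub>h\<close>, this writes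
  \<open>\<A>\<close> as \<open>\<Sum>\<^sub>l c\<^sub>l [x\<^sub>l\<^sup>1, \<dots>, x\<^sub>l\<^sup>m]\<^sub>\<otimes>\<^sub>h\<close> with \<open>c\<^sub>l \<ge> 0\<close>, and \<open>\<surd>c\<^sub>l\<close> is absorbed into the
  first factor.\<close>

section \<open>Conic hulls in finite-dimensional coordinate spaces\<close>

definition dot_on :: "'j set \<Rightarrow> ('j \<Rightarrow> real) \<Rightarrow> ('j \<Rightarrow> real) \<Rightarrow> real" where
  "dot_on J a v = (\<Sum>j\<in>J. a j * v j)"

definition supported_on :: "'j set \<Rightarrow> ('j \<Rightarrow> real) set" where
  "supported_on J = {v. \<forall>j. j \<notin> J \<longrightarrow> v j = 0}"

definition pos_comb_closed :: "('j \<Rightarrow> real) set \<Rightarrow> bool" where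
  "pos_comb_closed P \<longleftrightarrow> (\<forall>x\<in>P. \<forall>y\<in>P. \<forall>s>0. \<forall>t>0. (\<lambda>j. s * x j + t * y j) \<in> P)"

definition conic_hull :: "('j \<Rightarrow> real) set \<Rightarrow> ('j \<Rightarrow> real) set" where
  "conic_hull T = {v. \<exists>(r::nat) c t. (\<forall>l<r. 0 \<le> c l \<and> t l \<in> T) \<and> v = (\<lambda>j. \<Sum>l<r. c l * t l j)}"

lemma dot_on_lincomb:
  "dot_on J a (\<lambda>j. s * x j + t * y j) = s * dot_on J a x + t * dot_on J a y"
  unfolding dot_on_def by (simp add: algebra_simps sum.distrib sum_distrib_left)

lemma dot_on_scale: "dot_on J a (\<lambda>j. c * v j) = c * dot_on J a v"
  unfolding dot_on_def by (simp add: sum_distrib_left mult.left_commute)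

lemma dot_on_sum:
  "dot_on J a (\<lambda>j. \<Sum>l<r. c l * t l j) = (\<Sum>l<r. c l * dot_on J a (t l))"
  unfolding dot_on_def by (simp add: sum_distrib_left sum.swap[of _ J] mult.left_commute)

lemma dot_on_insert:
  "finite J \<Longrightarrow> i \<notin> J \<Longrightarrow> dot_on (insert i J) a v = a i * v i + dot_on J a v"
  unfolding dot_on_def by simp

lemma dot_on_upd_other: "i \<notin> J \<Longrightarrow> dot_on J (a(i := \<alpha>)) v = dot_on J a v"
  unfolding dot_on_def by (intro sum.cong) auto

lemma dot_on_delta:
  assumes "finite J" "i \<in> J"
  shows "dot_on J (\<lambda>j. if j = i then \<sigma> else 0) v = \<sigma> * v i"
proof -
  have "dot_on J (\<lambda>j. if j = i then \<sigma> else 0) v = (\<Sum>j\<in>J. if j = i then \<sigma> * v j else 0)"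
    unfolding dot_on_def by (intro sum.cong) auto
  also have "\<dots> = \<sigma> * v i"
    using assms by simp
  finally show ?thesis .
qed

lemma pos_comb_closedD:
  "pos_comb_closed P \<Longrightarrow> x \<in> P \<Longrightarrow> y \<in> P \<Longrightarrow> 0 < s \<Longrightarrow> 0 < t \<Longrightarrow> (\<lambda>j. s * x j + t * y j) \<in> P"
  unfolding pos_comb_closed_def by blast

lemma pos_comb_closed_bounds_ordered:
  assumes P: "pos_comb_closed P"
    and nonneg: "\<And>z. z \<in> P \<Longrightarrow> z i = 0 \<Longrightarrow> 0 \<le> dot_on J a z"
    and w: "w \<in> P" "0 < w i" and v: "v \<in> P" "v i < 0"
  shows "- dot_on J a w / w i \<le> dot_on J a v / - v i"
proof -
  have "(\<lambda>j. - v i * w j + w i * v j) \<in> P"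
    by (rule pos_comb_closedD[OF P w(1) v(1)]) (use w v in auto)
  then have "0 \<le> dot_on J a (\<lambda>j. - v i * w j + w i * v j)"
    by (rule nonneg) simp
  then have "0 \<le> - v i * dot_on J a w + w i * dot_on J a v"
    by (simp only: dot_on_lincomb)
  with w(2) v(2) show ?thesis
    by (simp add: field_simps)
qed

text \<open>Fourier--Motzkin elimination of the coordinate \<open>i\<close>.\<close>
lemma pos_comb_closed_extend_functional:
  assumes P: "pos_comb_closed P"
    and x: "x \<in> P" "x i < 0" and y: "y \<in> P" "0 < y i"
    and nonneg: "\<And>z. z \<in> P \<Longrightarrow> z i = 0 \<Longrightarrow> 0 \<le> dot_on J a z"
  shows "\<exists>\<alpha>. \<forall>w\<in>P. 0 \<le> \<alpha> * w i + dot_on J a w"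
proof -
  define L where "L = {- dot_on J a w / w i | w. w \<in> P \<and> 0 < w i}"
  define U where "U = {dot_on J a v / - v i | v. v \<in> P \<and> v i < 0}"
  have L_le_U: "l \<le> u" if "l \<in> L" "u \<in> U" for l u
    using that pos_comb_closed_bounds_ordered[OF P nonneg] unfolding L_def U_def by blast
  have "L \<noteq> {}"
    using y unfolding L_def by blast
  obtain u0 where "u0 \<in> U"
    using x unfolding U_def by blast
  then have bdd: "bdd_above L"
    using L_le_U by (intro bdd_aboveI[of _ u0])
  show ?thesis
  proof (intro exI ballI)
    fix w assume "w \<in> P"
    consider "0 < w i" | "w i < 0" | "w i = 0" by linarith
    then show "0 \<le> Sup L * w i + dot_on J a w"
    proof cases
      case 1
      then have "- dot_on J a w / w i \<le> Sup L"
        using \<open>w \<in> P\<close> bdd by (intro cSup_upper) (auto simp: L_def)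
      then show ?thesis
        using 1 by (simp add: field_simps)
    next
      case 2
      then have "Sup L \<le> dot_on J a w / - w i"
        using \<open>w \<in> P\<close> \<open>L \<noteq> {}\<close> L_le_U by (intro cSup_least) (auto simp: U_def)
      then show ?thesis
        using 2 by (simp add: field_simps)
    qed (use \<open>w \<in> P\<close> nonneg in simp)
  qed
qed

lemma pos_comb_closed_hyperplane: "pos_comb_closed P \<Longrightarrow> pos_comb_closed {z \<in> P. z i = 0}"
  unfolding pos_comb_closed_def by auto

lemma one_signed_coordinate:
  assumes "\<not> (\<exists>x\<in>P. \<exists>y\<in>P. x i < 0 \<and> 0 < y i)"
  obtains \<sigma> :: real where "\<sigma> \<noteq> 0" "\<forall>x\<in>P. 0 \<le> \<sigma> * x i"
proof (cases "\<forall>x\<in>P. 0 \<le> x i")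
  case True
  with that[of 1] show ?thesis
    by simp
next
  case False
  with assms have "\<forall>x\<in>P. x i \<le> 0"
    by (meson not_le)
  with that[of "- 1"] show ?thesis
    by simp
qed

lemma pos_comb_closed_separation:
  assumes "finite J" "P \<subseteq> supported_on J" "pos_comb_closed P" "(\<lambda>j. 0) \<notin> P" "P \<noteq> {}"
  shows "\<exists>a. (\<exists>j\<in>J. a j \<noteq> 0) \<and> (\<forall>x\<in>P. 0 \<le> dot_on J a x)"
  using assms
proof (induction J arbitrary: P rule: finite_induct)
  case empty
  then have "P \<subseteq> {\<lambda>j. 0}"
    by (auto simp: supported_on_def fun_eq_iff)
  with empty.prems(3,4) show ?case
    by blast
next
  case (insert i J)
  show ?case
  proof (cases "\<exists>x\<in>P. \<exists>y\<in>P. x i < 0 \<and> 0 < y i")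
    case True
    then obtain x y where x: "x \<in> P" "x i < 0" and y: "y \<in> P" "0 < y i"
      by blast
    define P' where "P' = {z \<in> P. z i = 0}"
    have "(\<lambda>j. y i * x j + - x i * y j) \<in> P"
      by (rule pos_comb_closedD[OF insert.prems(2) x(1) y(1)]) (use x y in auto)
    then have "P' \<noteq> {}"
      unfolding P'_def by (auto simp: algebra_simps)
    moreover have "P' \<subseteq> supported_on J" "(\<lambda>j. 0) \<notin> P'"
      using insert.prems(1,3) unfolding P'_def supported_on_def by auto
    ultimately obtain a where a: "\<exists>j\<in>J. a j \<noteq> 0" "\<forall>z\<in>P'. 0 \<le> dot_on J a z"
      using insert.IH[of P'] pos_comb_closed_hyperplane[OF insert.prems(2)] unfolding P'_def by blast
    obtain \<alpha> where "\<forall>w\<in>P. 0 \<le> \<alpha> * w i + dot_on J a w"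
      using pos_comb_closed_extend_functional[OF insert.prems(2) x y] a(2) unfolding P'_def by blast
    then have "\<forall>w\<in>P. 0 \<le> dot_on (insert i J) (a(i := \<alpha>)) w"
      using insert.hyps by (simp add: dot_on_insert dot_on_upd_other)
    moreover have "\<exists>j\<in>insert i J. (a(i := \<alpha>)) j \<noteq> 0"
      using a(1) insert.hyps(2) by force
    ultimately show ?thesis
      by blast
  next
    case False
    then obtain \<sigma> :: real where "\<sigma> \<noteq> 0" "\<forall>x\<in>P. 0 \<le> \<sigma> * x i"
      by (rule one_signed_coordinate)
    with insert.hyps(1) show ?thesis
      by (intro exI[of _ "\<lambda>j. if j = i then \<sigma> else 0"]) (auto simp: dot_on_delta)
  qed
qed

lemma conic_hull_zero: "(\<lambda>j. 0) \<in> conic_hull T"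
  unfolding conic_hull_def by (intro CollectI exI[of _ 0]) simp

lemma conic_hull_scale:
  assumes "v \<in> conic_hull T" "0 \<le> s"
  shows "(\<lambda>j. s * v j) \<in> conic_hull T"
proof -
  obtain r c t where "\<forall>l<(r::nat). 0 \<le> c l \<and> t l \<in> T" "v = (\<lambda>j. \<Sum>l<r. c l * t l j)"
    using assms(1) unfolding conic_hull_def by blast
  with assms(2) show ?thesis
    unfolding conic_hull_def
    by (intro CollectI exI[of _ r] exI[of _ "\<lambda>l. s * c l"] exI[of _ t])
       (auto simp: sum_distrib_left mult.assoc)
qed

lemma conic_hull_single: "t \<in> T \<Longrightarrow> 0 \<le> s \<Longrightarrow> (\<lambda>j. s * t j) \<in> conic_hull T"
  unfolding conic_hull_def
  by (intro CollectI exI[of _ 1] exI[of _ "\<lambda>_. s"] exI[of _ "\<lambda>_. t"]) simp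

lemma conic_hull_add:
  assumes "v \<in> conic_hull T" "w \<in> conic_hull T"
  shows "(\<lambda>j. v j + w j) \<in> conic_hull T"
proof -
  obtain r c t where v: "\<forall>l<(r::nat). 0 \<le> c l \<and> t l \<in> T" "v = (\<lambda>j. \<Sum>l<r. c l * t l j)"
    using assms(1) unfolding conic_hull_def by blast
  obtain r' c' t' where w: "\<forall>l<(r'::nat). 0 \<le> c' l \<and> t' l \<in> T" "w = (\<lambda>j. \<Sum>l<r'. c' l * t' l j)"
    using assms(2) unfolding conic_hull_def by blast
  define C where "C = (\<lambda>l. if l < r then c l else c' (l - r))"
  define T' where "T' = (\<lambda>l. if l < r then t l else t' (l - r))"
  have sum_append: "(\<Sum>l<r + r'. g l) = (\<Sum>l<r. g l) + (\<Sum>l<r'. g (r + l))" for g :: "nat \<Rightarrow> real"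
    by (induction r') (simp_all add: add.assoc)
  have "(\<lambda>j. v j + w j) = (\<lambda>j. \<Sum>l<r + r'. C l * T' l j)"
    unfolding v w C_def T'_def sum_append by simp
  moreover have "\<forall>l<r + r'. 0 \<le> C l \<and> T' l \<in> T"
    using v w unfolding C_def T'_def by auto
  ultimately show ?thesis
    unfolding conic_hull_def by blast
qed

lemma conic_hull_supported: "T \<subseteq> supported_on J \<Longrightarrow> conic_hull T \<subseteq> supported_on J"
  unfolding conic_hull_def supported_on_def by (auto intro!: sum.neutral)

lemma pos_comb_closed_conic_hull_shift:
  "pos_comb_closed {(\<lambda>j. v j - s * p j) | v s. v \<in> conic_hull T \<and> 0 < s}"
proof (unfold pos_comb_closed_def, intro ballI allI impI)
  fix x y and s t :: real
  assume "x \<in> {(\<lambda>j. v j - s * p j) | v s. v \<in> conic_hull T \<and> 0 < s}"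
    and "y \<in> {(\<lambda>j. v j - s * p j) | v s. v \<in> conic_hull T \<and> 0 < s}"
    and "0 < s" "0 < t"
  then obtain v v' \<sigma> \<sigma>' where v: "v \<in> conic_hull T" "v' \<in> conic_hull T" "0 < \<sigma>" "0 < \<sigma>'"
    and xy: "x = (\<lambda>j. v j - \<sigma> * p j)" "y = (\<lambda>j. v' j - \<sigma>' * p j)"
    by blast
  have "(\<lambda>j. s * v j + t * v' j) \<in> conic_hull T"
    using v \<open>0 < s\<close> \<open>0 < t\<close> by (simp add: conic_hull_add conic_hull_scale)
  moreover have "0 < s * \<sigma> + t * \<sigma>'"
    using v \<open>0 < s\<close> \<open>0 < t\<close> by (simp add: add_pos_pos)
  moreover have "(\<lambda>j. s * x j + t * y j) = (\<lambda>j. (s * v j + t * v' j) - (s * \<sigma> + t * \<sigma>') * p j)"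
    unfolding xy by (simp add: fun_eq_iff algebra_simps)
  ultimately show "(\<lambda>j. s * x j + t * y j) \<in> {(\<lambda>j. v j - s * p j) | v s. v \<in> conic_hull T \<and> 0 < s}"
    by (intro CollectI exI[of _ "\<lambda>j. s * v j + t * v' j"] exI[of _ "s * \<sigma> + t * \<sigma>'"] conjI)
       simp_all
qed

lemma dot_on_dominating_conic_hull:
  assumes "\<And>v s. v \<in> conic_hull T \<Longrightarrow> 0 < s \<Longrightarrow> s * dot_on J a p \<le> dot_on J a v"
  shows "dot_on J a p \<le> 0" and "t \<in> T \<Longrightarrow> 0 \<le> dot_on J a t"
proof -
  show p: "dot_on J a p \<le> 0"
    using assms[OF conic_hull_zero, of 1] by (simp add: dot_on_def)
  assume "t \<in> T"
  show "0 \<le> dot_on J a t"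
  proof (rule ccontr)
    assume neg: "\<not> 0 \<le> dot_on J a t"
    define c where "c = (1 - dot_on J a p) / - dot_on J a t"
    have "0 < c"
      unfolding c_def using neg p by (intro divide_pos_pos) auto
    then have "dot_on J a p \<le> dot_on J a (\<lambda>j. c * t j)"
      using assms[of _ 1] conic_hull_single[OF \<open>t \<in> T\<close>] by simp
    also have "\<dots> = dot_on J a p - 1"
      using neg unfolding dot_on_scale c_def by (simp add: field_simps)
    finally show False
      by simp
  qed
qed

text \<open>Separate \<open>0\<close> from the cone \<open>{v - s p | v \<in> conic_hull T, s > 0}\<close>, which misses \<open>0\<close>
  because \<open>p \<notin> conic_hull T\<close>.\<close>
lemma separation_from_conic_hull:
  assumes "finite J" "T \<subseteq> supported_on J" "p \<in> supported_on J" "p \<notin> conic_hull T"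
  obtains a where "\<exists>j\<in>J. a j \<noteq> 0" "\<And>t. t \<in> T \<Longrightarrow> 0 \<le> dot_on J a t" "dot_on J a p \<le> 0"
proof -
  define P where "P = {(\<lambda>j. v j - s * p j) | v s. v \<in> conic_hull T \<and> 0 < s}"
  have "P \<subseteq> supported_on J"
    using conic_hull_supported[OF assms(2)] assms(3) unfolding P_def supported_on_def by auto
  moreover have "(\<lambda>j. 0) \<notin> P"
  proof
    assume "(\<lambda>j. 0) \<in> P"
    then obtain v s where "v \<in> conic_hull T" "0 < s" "(\<lambda>j. 0) = (\<lambda>j. v j - s * p j)"
      unfolding P_def by blast
    then have "p = (\<lambda>j. (1 / s) * v j)"
      by (simp add: fun_eq_iff field_simps)
    with conic_hull_scale[OF \<open>v \<in> conic_hull T\<close>, of "1 / s"] \<open>0 < s\<close> assms(4) show False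
      by simp
  qed
  moreover have "(\<lambda>j. 0 - 1 * p j) \<in> P"
    unfolding P_def using conic_hull_zero by (intro CollectI exI[of _ "\<lambda>j. 0"] exI[of _ 1]) simp
  then have "P \<noteq> {}"
    by blast
  moreover have "pos_comb_closed P"
    unfolding P_def by (rule pos_comb_closed_conic_hull_shift)
  ultimately obtain a where a: "\<exists>j\<in>J. a j \<noteq> 0" "\<forall>x\<in>P. 0 \<le> dot_on J a x"
    using pos_comb_closed_separation[OF assms(1)] by blast
  have gap: "s * dot_on J a p \<le> dot_on J a v" if "v \<in> conic_hull T" "0 < s" for v s
  proof -
    have "(\<lambda>j. v j - s * p j) \<in> P"
      unfolding P_def using that by blast
    then have "0 \<le> dot_on J a (\<lambda>j. v j - s * p j)"
      using a(2) by blast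
    then show ?thesis
      using dot_on_lincomb[of J a 1 v "- s" p] by simp
  qed
  show ?thesis
    using that[OF a(1) dot_on_dominating_conic_hull(2)[OF gap] dot_on_dominating_conic_hull(1)[OF gap]] .
qed

text \<open>Since \<open>a i \<noteq> 0\<close>, on the hyperplane \<open>dot_on J a _ = 0\<close> the coordinate \<open>i\<close> is determined
  by the others.\<close>
lemma conic_hull_lift_from_hyperplane:
  assumes "finite J" "i \<in> J" "a i \<noteq> 0" "dot_on J a p = 0"
    and "p(i := 0) \<in> conic_hull ((\<lambda>v. v(i := 0)) ` {t \<in> T. dot_on J a t = 0})"
  shows "p \<in> conic_hull T"
proof -
  obtain r c t' where ct': "\<forall>l<(r::nat). 0 \<le> c l \<and> t' l \<in> (\<lambda>v. v(i := 0)) ` {t \<in> T. dot_on J a t = 0}"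
    and p': "p(i := 0) = (\<lambda>j. \<Sum>l<r. c l * t' l j)"
    using assms(5) unfolding conic_hull_def by blast
  have "\<forall>l. \<exists>u. l < r \<longrightarrow> u \<in> T \<and> dot_on J a u = 0 \<and> t' l = u(i := 0)"
    using ct' by blast
  then obtain t where t: "\<And>l. l < r \<Longrightarrow> t l \<in> T \<and> dot_on J a (t l) = 0 \<and> t' l = (t l)(i := 0)"
    by metis
  define q where "q = (\<lambda>j. \<Sum>l<r. c l * t l j)"
  have q_eq_p: "q j = p j" if "j \<noteq> i" for j
    using fun_cong[OF p', of j] t that unfolding q_def by (auto intro!: sum.cong)
  have "dot_on J a q = 0"
    unfolding q_def dot_on_sum using t by simp
  then have "a i * q i + dot_on (J - {i}) a q = a i * p i + dot_on (J - {i}) a p"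
    using assms(1,2,4) dot_on_insert[of "J - {i}" i] by (simp add: insert_absorb)
  moreover have "dot_on (J - {i}) a q = dot_on (J - {i}) a p"
    unfolding dot_on_def using q_eq_p by (intro sum.cong) auto
  ultimately have "q i = p i"
    using assms(3) by simp
  with q_eq_p have "p = q"
    by (metis ext)
  then show ?thesis
    using ct' t unfolding q_def conic_hull_def by blast
qed

lemma has_bochner_integral_nonneg_le_zero:
  fixes g :: "'x \<Rightarrow> real"
  assumes "has_bochner_integral M g c" "AE x in M. 0 \<le> g x" "c \<le> 0"
  shows "c = 0" and "AE x in M. g x = 0"
proof -
  have integrable: "integrable M g" and integral: "integral\<^sup>L M g = c"
    using assms(1) unfolding has_bochner_integral_iff by auto
  show "c = 0"
    using integral_nonneg_AE[OF assms(2)] assms(3) unfolding integral by simp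
  then show "AE x in M. g x = 0"
    using integral_nonneg_eq_0_iff_AE[OF integrable assms(2)] integral by simp
qed

lemma has_bochner_integral_in_conic_hull:
  fixes f :: "'x \<Rightarrow> 'j \<Rightarrow> real"
  assumes "finite J" "T \<subseteq> supported_on J" "p \<in> supported_on J"
    and "AE x in M. f x \<in> T"
    and "\<And>j. j \<in> J \<Longrightarrow> has_bochner_integral M (\<lambda>x. f x j) (p j)"
  shows "p \<in> conic_hull T"
  using assms
proof (induction "card J" arbitrary: J T f p rule: less_induct)
  case less
  show ?case
  proof (rule ccontr)
    assume "p \<notin> conic_hull T"
    then obtain a where a: "\<exists>j\<in>J. a j \<noteq> 0" "\<And>t. t \<in> T \<Longrightarrow> 0 \<le> dot_on J a t"
      and "dot_on J a p \<le> 0"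
      using separation_from_conic_hull less.prems(1-3) by blast
    have "has_bochner_integral M (\<lambda>x. dot_on J a (f x)) (dot_on J a p)"
      unfolding dot_on_def using less.prems(5) by (intro has_bochner_integral_sum) auto
    moreover have "AE x in M. 0 \<le> dot_on J a (f x)"
      using less.prems(4) by eventually_elim (rule a(2))
    ultimately have p: "dot_on J a p = 0" and AE_zero: "AE x in M. dot_on J a (f x) = 0"
      using has_bochner_integral_nonneg_le_zero \<open>dot_on J a p \<le> 0\<close> by blast+
    have AE_hyperplane: "AE x in M. f x \<in> {t \<in> T. dot_on J a t = 0}"
      using less.prems(4) AE_zero by eventually_elim simp
    obtain i where i: "i \<in> J" "a i \<noteq> 0"
      using a(1) by blast
    have "p(i := 0) \<in> conic_hull ((\<lambda>v. v(i := 0)) ` {t \<in> T. dot_on J a t = 0})"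
    proof (rule less.hyps[where J = "J - {i}" and f = "\<lambda>x. (f x)(i := 0)"])
      show "card (J - {i}) < card J"
        using less.prems(1) i(1) by (rule card_Diff1_less)
      show "(\<lambda>v. v(i := 0)) ` {t \<in> T. dot_on J a t = 0} \<subseteq> supported_on (J - {i})"
        using less.prems(2) by (auto simp: supported_on_def)
      show "AE x in M. (f x)(i := 0) \<in> (\<lambda>v. v(i := 0)) ` {t \<in> T. dot_on J a t = 0}"
        using AE_hyperplane by eventually_elim blast
      show "has_bochner_integral M (\<lambda>x. ((f x)(i := 0)) j) ((p(i := 0)) j)" if "j \<in> J - {i}" for j
        using less.prems(5) that by simp
    qed (use less.prems(1,3) in \<open>auto simp: supported_on_def\<close>)
    then have "p \<in> conic_hull T"
      by (rule conic_hull_lift_from_hyperplane[OF less.prems(1) i p])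
    with \<open>p \<notin> conic_hull T\<close> show False ..
  qed
qed

section \<open>Supports and point masses of Borel measures\<close>

lemma AE_in_msupport:
  fixes \<mu> :: "'a::second_countable_topology measure"
  assumes "sets \<mu> = sets borel"
  shows "AE x in \<mu>. x \<in> msupport \<mu>"
proof -
  define F where "F = {U. open U \<and> emeasure \<mu> U = 0}"
  obtain F' where F': "F' \<subseteq> F" "countable F'" "\<Union>F' = \<Union>F"
    using Lindelof[of F] unfolding F_def by auto
  have "(\<Union>U\<in>F'. U) \<in> null_sets \<mu>"
  proof (rule null_sets_UN')
    show "countable F'" by fact
    fix U assume "U \<in> F'"
    then have "open U" "emeasure \<mu> U = 0"
      using F' unfolding F_def by auto
    then show "U \<in> null_sets \<mu>"
      using assms by (auto intro: null_setsI)
  qed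
  moreover have "{x \<in> space \<mu>. x \<notin> msupport \<mu>} \<subseteq> (\<Union>U\<in>F'. U)"
    using F'(3) unfolding msupport_def F_def by (auto simp: not_gr_zero)
  ultimately show ?thesis
    by (rule AE_I')
qed

lemma msupport_distr_point_measure:
  fixes x :: "'i \<Rightarrow> 'a::t1_space"
  assumes "finite A"
  shows "msupport (distr (point_measure A c) borel x) \<subseteq> x ` A"
proof
  fix y assume y: "y \<in> msupport (distr (point_measure A c) borel x)"
  show "y \<in> x ` A"
  proof (rule ccontr)
    assume "y \<notin> x ` A"
    moreover have "open (- x ` A)"
      using assms by (intro open_Compl finite_imp_closed) auto
    moreover have "x -` (- x ` A) \<inter> space (point_measure A c) = {}"
      by (auto simp: space_point_measure)
    then have "emeasure (distr (point_measure A c) borel x) (- x ` A) = 0"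
      using \<open>open (- x ` A)\<close> by (subst emeasure_distr) auto
    ultimately show False
      using y unfolding msupport_def by auto
  qed
qed

lemma has_bochner_integral_distr_point_measure:
  fixes f :: "'a::topological_space \<Rightarrow> 'b::{banach, second_countable_topology}"
  assumes "finite A" "\<And>l. l \<in> A \<Longrightarrow> 0 \<le> c l" "f \<in> borel_measurable borel"
  shows "has_bochner_integral (distr (point_measure A (\<lambda>l. ennreal (c l))) borel x) f
    (\<Sum>l\<in>A. c l *\<^sub>R f (x l))"
proof (rule has_bochner_integral_distr[OF assms(3)])
  show "x \<in> measurable (point_measure A (\<lambda>l. ennreal (c l))) borel"
    by simp
  show "has_bochner_integral (point_measure A (\<lambda>l. ennreal (c l))) (\<lambda>l. f (x l)) (\<Sum>l\<in>A. c l *\<^sub>R f (x l))"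
    using assms(1,2)
    by (simp add: has_bochner_integral_iff integrable_point_measure_finite
        lebesgue_integral_point_measure_finite)
qed

section \<open>Hermitian tensor powers\<close>

lemma finite_midx: "finite (midx dims)"
proof (rule finite_subset)
  show "midx dims \<subseteq> {xs. set xs \<subseteq> {..<Max (set dims)} \<and> length xs = length dims}"
    by (fastforce simp: midx_def in_set_conv_nth intro: order.strict_trans2[OF _ Max_ge])
  show "finite {xs. set xs \<subseteq> {..<Max (set dims)} \<and> length xs = length dims}"
    by (rule finite_lists_length_eq) simp
qed

lemma borel_measurable_hten: "(\<lambda>x. hten dims x i j) \<in> borel_measurable borel"
proof -
  have coord: "continuous_on UNIV (\<lambda>x::nat \<Rightarrow> nat \<Rightarrow> complex. x k a)" for k a
    by (rule continuous_on_product_then_coordinatewise[OF continuous_on_product_coordinates])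
  have "continuous_on UNIV (\<lambda>x. \<Prod>k<length dims. x k (i ! k) * cnj (x k (j ! k)))"
    by (intro continuous_intros coord)
  then have "(\<lambda>x. \<Prod>k<length dims. x k (i ! k) * cnj (x k (j ! k))) \<in> borel_measurable borel"
    by (rule borel_measurable_continuous_onI)
  then show ?thesis
    unfolding hten_def by (cases "i \<in> midx dims \<and> j \<in> midx dims") simp_all
qed

lemma hten_cong:
  assumes "\<And>k i. k < length dims \<Longrightarrow> i < dims ! k \<Longrightarrow> x k i = y k i"
  shows "hten dims x = hten dims y"
  using assms unfolding hten_def midx_def by (intro ext) (auto intro!: prod.cong)

lemma hten_scale:
  "hten dims (\<lambda>k i. s k * x k i) =
    (\<lambda>i j. of_real (\<Prod>k<length dims. (cmod (s k))\<^sup>2) * hten dims x i j)"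
proof (intro ext)
  fix i j
  have "s k * x k (i ! k) * cnj (s k * x k (j ! k)) = s k * cnj (s k) * (x k (i ! k) * cnj (x k (j ! k)))"
    for k
    by (simp add: algebra_simps)
  then show "hten dims (\<lambda>k i. s k * x k i) i j = of_real (\<Prod>k<length dims. (cmod (s k))\<^sup>2) * hten dims x i j"
    unfolding hten_def of_real_prod complex_norm_square by (simp add: prod.distrib)
qed

lemma hten_scale_first_factor:
  assumes "dims \<noteq> []" "0 \<le> c"
  shows "hten dims (\<lambda>k i. (if k = 0 then of_real (sqrt c) else 1) * x k i) =
    (\<lambda>i j. of_real c * hten dims x i j)"
proof -
  have "(\<Prod>k<length dims. (cmod (if k = 0 then of_real (sqrt c) else 1 :: complex))\<^sup>2) =
      (\<Prod>k<length dims. if k = 0 then c else 1)"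
    using assms(2) by (intro prod.cong) auto
  also have "\<dots> = c"
    using assms(1) by simp
  finally show ?thesis
    unfolding hten_scale by simp
qed

lemma unit_vector_in_sphere_prod:
  assumes "K = \<real> \<or> K = UNIV" "\<forall>k<length dims. 0 < dims ! k"
  shows "(\<lambda>k i. if k < length dims \<and> i = 0 then 1 else 0) \<in> sphere_prod K dims"
proof -
  have "(\<Sum>i<dims ! k. (cmod (if k < length dims \<and> i = 0 then 1 else 0))\<^sup>2) = 1"
    if "k < length dims" for k
  proof -
    have "(\<Sum>i<dims ! k. (cmod (if k < length dims \<and> i = 0 then 1 else 0))\<^sup>2) =
        (\<Sum>i<dims ! k. if i = 0 then 1 else 0)"
      using that by (intro sum.cong) auto
    also have "\<dots> = 1"
      using that assms(2) by simp
    finally show ?thesis .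
  qed
  then show ?thesis
    using assms unfolding sphere_prod_def by auto
qed

lemma sum_cmod_sq_normalize:
  fixes v :: "nat \<Rightarrow> complex"
  assumes "(\<Sum>i<n. (cmod (v i))\<^sup>2) \<noteq> 0"
  shows "(\<Sum>i<n. (cmod (v i / of_real (sqrt (\<Sum>i<n. (cmod (v i))\<^sup>2))))\<^sup>2) = 1"
proof -
  define s where "s = (\<Sum>i<n. (cmod (v i))\<^sup>2)"
  have "0 < s"
    using assms sum_nonneg[of "{..<n}" "\<lambda>i. (cmod (v i))\<^sup>2"] unfolding s_def by auto
  then have "(\<Sum>i<n. (cmod (v i / of_real (sqrt s)))\<^sup>2) = (\<Sum>i<n. (cmod (v i))\<^sup>2) / s"
    by (simp add: norm_divide power_divide sum_divide_distrib)
  with \<open>0 < s\<close> show ?thesis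
    unfolding s_def by simp
qed

text \<open>If some factor vanishes, the weight \<open>c\<close> is \<open>0\<close> and any point of the sphere product
  serves as \<open>x\<close>.\<close>
lemma hten_normalize:
  assumes K: "K = \<real> \<or> K = UNIV" and dims: "\<forall>k<length dims. 0 < dims ! k"
    and u: "\<forall>k<length dims. \<forall>i<dims ! k. u k i \<in> K"
  obtains x c where "x \<in> sphere_prod K dims" "0 \<le> c" "hten dims u = (\<lambda>i j. of_real c * hten dims x i j)"
proof (cases "\<forall>k<length dims. (\<Sum>i<dims ! k. (cmod (u k i))\<^sup>2) \<noteq> 0")
  case True
  define \<nu> where "\<nu> = (\<lambda>k. sqrt (\<Sum>i<dims ! k. (cmod (u k i))\<^sup>2))"
  define x where "x = (\<lambda>k i. if k < length dims \<and> i < dims ! k then u k i / of_real (\<nu> k) else 0)"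
  have "hten dims u = hten dims (\<lambda>k i. of_real (\<nu> k) * x k i)"
    using True unfolding x_def \<nu>_def by (intro hten_cong) simp
  also have "\<dots> = (\<lambda>i j. of_real (\<Prod>k<length dims. (\<nu> k)\<^sup>2) * hten dims x i j)"
    unfolding hten_scale by (simp add: \<nu>_def)
  finally have "hten dims u = (\<lambda>i j. of_real (\<Prod>k<length dims. (\<nu> k)\<^sup>2) * hten dims x i j)" .
  moreover have "x \<in> sphere_prod K dims"
  proof -
    have "x k i \<in> K" if "k < length dims" "i < dims ! k" for k i
      using K u that unfolding x_def by auto
    moreover have "(\<Sum>i<dims ! k. (cmod (x k i))\<^sup>2) = 1" if "k < length dims" for k
      using sum_cmod_sq_normalize[where n = "dims ! k" and v = "u k"] True that unfolding x_def \<nu>_def by simp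
    ultimately show ?thesis
      unfolding sphere_prod_def x_def by auto
  qed
  ultimately show ?thesis
    using that by (meson prod_nonneg zero_le_power2)
next
  case False
  then obtain k where k: "k < length dims" "\<forall>i<dims ! k. u k i = 0"
    by (auto simp: sum_nonneg_eq_0_iff)
  have "hten dims u = (\<lambda>i j. of_real 0 * hten dims x i j)" for x
    using k unfolding hten_def midx_def by (auto intro!: ext prod_zero bexI[of _ k])
  then show ?thesis
    using that[OF unit_vector_in_sphere_prod[OF K dims]] by blast
qed

lemma separable_imp_integral_representation:
  assumes K: "K = \<real> \<or> K = UNIV" and dims: "\<forall>k<length dims. 0 < dims ! k"
    and "separable K dims A"
  shows "\<exists>\<mu> :: (nat \<Rightarrow> nat \<Rightarrow> complex) measure.
      sets \<mu> = sets borel \<and> msupport \<mu> \<subseteq> sphere_prod K dims \<and>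
      (\<forall>i\<in>midx dims. \<forall>j\<in>midx dims. has_bochner_integral \<mu> (\<lambda>x. hten dims x i j) (A i j))"
proof -
  obtain r u where u: "\<forall>l<(r::nat). \<forall>k<length dims. \<forall>i<dims ! k. u l k i \<in> K"
    and A: "A = (\<lambda>i j. \<Sum>l<r. hten dims (u l) i j)"
    using assms(3) unfolding separable_def by blast
  have "\<forall>l. \<exists>x c. l < r \<longrightarrow> x \<in> sphere_prod K dims \<and> 0 \<le> c \<and>
      hten dims (u l) = (\<lambda>i j. of_real c * hten dims x i j)"
    using hten_normalize[OF K dims] u by metis
  then obtain x c where x: "\<And>l. l < r \<Longrightarrow> x l \<in> sphere_prod K dims"
    and c: "\<And>l. l < r \<Longrightarrow> 0 \<le> c l"
    and u_eq: "\<And>l. l < r \<Longrightarrow> hten dims (u l) = (\<lambda>i j. of_real (c l) * hten dims (x l) i j)"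
    by metis
  define \<mu> where "\<mu> = distr (point_measure {..<r} (\<lambda>l. ennreal (c l))) borel x"
  have "sets \<mu> = sets borel"
    unfolding \<mu>_def by simp
  moreover have "msupport \<mu> \<subseteq> sphere_prod K dims"
    using msupport_distr_point_measure[of "{..<r}"] x unfolding \<mu>_def by blast
  moreover have "has_bochner_integral \<mu> (\<lambda>x. hten dims x i j) (A i j)" for i j
  proof -
    have "has_bochner_integral \<mu> (\<lambda>x. hten dims x i j) (\<Sum>l<r. c l *\<^sub>R hten dims (x l) i j)"
      unfolding \<mu>_def using c by (intro has_bochner_integral_distr_point_measure borel_measurable_hten) auto
    also have "(\<Sum>l<r. c l *\<^sub>R hten dims (x l) i j) = A i j"
      unfolding A using u_eq by (simp add: scaleR_conv_of_real)
    finally show ?thesis .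
  qed
  ultimately show ?thesis
    by blast
qed

text \<open>Complex entries are split into real and imaginary parts, so that the real cone argument
  applies.\<close>
definition real_coords ::
    "nat list \<Rightarrow> (nat list \<Rightarrow> nat list \<Rightarrow> complex) \<Rightarrow> nat list \<times> nat list \<times> bool \<Rightarrow> real" where
  "real_coords dims B = (\<lambda>(i, j, b). if i \<in> midx dims \<and> j \<in> midx dims
      then (if b then Re (B i j) else Im (B i j)) else 0)"

lemma real_coords_supported: "real_coords dims B \<in> supported_on (midx dims \<times> midx dims \<times> UNIV)"
  unfolding supported_on_def real_coords_def by auto

lemma separable_if_real_coords_in_conic_hull:
  assumes K: "K = \<real> \<or> K = UNIV" and "dims \<noteq> []" and "A \<in> herm_tensors K dims"
    and "real_coords dims A \<in> conic_hull ((\<lambda>x. real_coords dims (hten dims x)) ` sphere_prod K dims)"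
  shows "separable K dims A"
proof -
  obtain r c t where ct: "\<forall>l<(r::nat). 0 \<le> c l \<and>
      t l \<in> (\<lambda>x. real_coords dims (hten dims x)) ` sphere_prod K dims"
    and A_coords: "real_coords dims A = (\<lambda>q. \<Sum>l<r. c l * t l q)"
    using assms(4) unfolding conic_hull_def by blast
  have "\<forall>l. \<exists>y. l < r \<longrightarrow> y \<in> sphere_prod K dims \<and> t l = real_coords dims (hten dims y)"
    using ct by blast
  then obtain x where x: "\<And>l. l < r \<Longrightarrow> x l \<in> sphere_prod K dims"
    and t: "\<And>l. l < r \<Longrightarrow> t l = real_coords dims (hten dims (x l))"
    by metis
  define u where "u = (\<lambda>l k i. (if k = 0 then of_real (sqrt (c l)) else 1) * x l k i)"
  have hten_u: "hten dims (u l) = (\<lambda>i j. of_real (c l) * hten dims (x l) i j)" if "l < r" for l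
    unfolding u_def using hten_scale_first_factor[OF \<open>dims \<noteq> []\<close>] ct that by blast
  have "A i j = (\<Sum>l<r. hten dims (u l) i j)" for i j
  proof (cases "i \<in> midx dims \<and> j \<in> midx dims")
    case True
    have Re_A: "Re (A i j) = (\<Sum>l<r. c l * Re (hten dims (x l) i j))"
      and Im_A: "Im (A i j) = (\<Sum>l<r. c l * Im (hten dims (x l) i j))"
      using fun_cong[OF A_coords, of "(i, j, True)"] fun_cong[OF A_coords, of "(i, j, False)"] t True
      by (auto simp: real_coords_def intro!: sum.cong)
    show ?thesis
      using Re_A Im_A hten_u by (intro complex_eqI) (simp_all add: Re_sum Im_sum)
  next
    case False
    then have "A i j = 0"
      using assms(3) unfolding herm_tensors_def by blast
    with False show ?thesis
      by (auto simp: hten_def)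
  qed
  moreover have "u l k i \<in> K" if "l < r" "k < length dims" "i < dims ! k" for l k i
    using K x[OF that(1)] that(2,3) unfolding u_def sphere_prod_def by auto
  ultimately show ?thesis
    unfolding separable_def by blast
qed

lemma integral_representation_imp_separable:
  fixes \<mu> :: "(nat \<Rightarrow> nat \<Rightarrow> complex) measure"
  assumes K: "K = \<real> \<or> K = UNIV" and "dims \<noteq> []" and "A \<in> herm_tensors K dims"
    and "sets \<mu> = sets borel" and "msupport \<mu> \<subseteq> sphere_prod K dims"
    and int: "\<forall>i\<in>midx dims. \<forall>j\<in>midx dims. has_bochner_integral \<mu> (\<lambda>x. hten dims x i j) (A i j)"
  shows "separable K dims A"
proof (rule separable_if_real_coords_in_conic_hull[OF assms(1-3)])
  have "AE x in \<mu>. x \<in> sphere_prod K dims"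
    using AE_in_msupport[OF assms(4)] assms(5) by (auto elim: AE_mp)
  then have "AE x in \<mu>. real_coords dims (hten dims x) \<in> (\<lambda>x. real_coords dims (hten dims x)) ` sphere_prod K dims"
    by eventually_elim simp
  moreover have "has_bochner_integral \<mu> (\<lambda>x. real_coords dims (hten dims x) q) (real_coords dims A q)"
    if q_index: "q \<in> midx dims \<times> midx dims \<times> UNIV" for q
  proof -
    obtain i j b where q: "q = (i, j, b)" "i \<in> midx dims" "j \<in> midx dims"
      using q_index by (cases q) auto
    with int have "has_bochner_integral \<mu> (\<lambda>x. hten dims x i j) (A i j)"
      by blast
    with q show ?thesis
      by (cases b) (simp_all add: real_coords_def has_bochner_integral_Re has_bochner_integral_Im)
  qed
  ultimately show "real_coords dims A \<in> conic_hull ((\<lambda>x. real_coords dims (hten dims x)) ` sphere_prod K dims)"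
    using finite_midx real_coords_supported
    by (intro has_bochner_integral_in_conic_hull[where J = "midx dims \<times> midx dims \<times> UNIV"]) auto
qed

theorem theorem6p4:
  fixes K :: "complex set" and dims :: "nat list"
    and A :: "nat list \<Rightarrow> nat list \<Rightarrow> complex"
  assumes "K = \<real> \<or> K = UNIV"
    and "dims \<noteq> []" and "\<forall>k<length dims. 0 < dims ! k"
    and "A \<in> herm_tensors K dims"
  shows "separable K dims A \<longleftrightarrow>
    (\<exists>\<mu> :: (nat \<Rightarrow> nat \<Rightarrow> complex) measure.
        sets \<mu> = sets borel \<and>
        msupport \<mu> \<subseteq> sphere_prod K dims \<and>
        (\<forall>i\<in>midx dims. \<forall>j\<in>midx dims.
           has_bochner_integral \<mu> (\<lambda>x. hten dims x i j) (A i j)))"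
  using separable_imp_integral_representation[OF assms(1,3)]
    integral_representation_imp_separable[OF assms(1,2,4)] by blast

end
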